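(* In the setting below, for any $\vec w=(w_1,\ldots,w_n)$ with each $w_i\in W_M^Q$, \[ \theta(\vec w)-\theta^M(\vec w)=\mathrm{expdim}_G(\vec w)-\mathrm{expdim}_M(\vec w). \]
   Context: $G=\mathrm{Sp}(2r)$ with standard torus, Borel, positive roots $R^+$ ($\epsilon_i-\epsilon_j$, $i<j$; $\epsilon_i+\epsilon_j$, $i\le j$) and simple roots $\alpha_i=\epsilon_i-\epsilon_{i+1}$, $\alpha_r=2\epsilon_r$; $x_1,\ldots,x_r$ the dual basis to the simple roots. For $1\le k\le s<r$, $M\cong\mathrm{Sp}(2s)\times\mathrm{Sp}(2(r-s))$ is the centralizer in $G$ of $\tau=\mathrm{diag}(-1,\ldots,-1,1,\ldots,1,-1,\ldots,-1)$ ($2(r-s)$ ones), with roots the roots of $G$ trivial on $\tau$. $P$ is the maximal parabolic omitting $\alpha_k$ ($G/P\cong\mathrm{IG}(k,2r)$), $x_P=x_k$, $Q=M\cap P$ ($M/Q\cong\mathrm{IG}(k,2s)$), $x_Q=x_P$, $W_M^Q\subseteq W^P$ minimal coset representatives, $C_w$, $C^M_w$ the Schubert cells. $\chi_w=\sum_{\beta\in(R^+\setminus R^+_L)\cap w^{-1}R^+}\beta$ ($R_L^+$ positive roots of the Levi of $P$), $\chi^M_w$ the same sum over roots of $M$ only; $1$ denotes the identity of $W$. $\theta(\vec w)=(\chi_1-\sum_i\chi_{w_i})(x_P)$, $\theta^M(\vec w)=(\chi^M_1-\sum_i\chi^M_{w_i})(x_Q)$, $\mathrm{expdim}_G(\vec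 w)=\dim(G/P)-\sum_i\mathrm{codim}(C_{w_i})$, $\mathrm{expdim}_M(\vec w)=\dim(M/Q)-\sum_i\mathrm{codim}(C^M_{w_i})$. *)

theory Defs
  imports Complex_Main "HOL-Library.Function_Algebras"
begin

text \<open>Root datum of Sp(2r).  Weights / roots are integer vectors \<open>nat \<Rightarrow> int\<close>
  in the basis eps_1,...,eps_r (coordinates 1..r, all other coordinates 0).
  Coweights are rational vectors \<open>nat \<Rightarrow> rat\<close>; pairing is the standard one.\<close>

definition eps :: "nat \<Rightarrow> (nat \<Rightarrow> int)" where
  "eps i = (\<lambda>j. if j = i then 1 else 0)"

definition dotp :: "nat \<Rightarrow> (nat \<Rightarrow> int) \<Rightarrow> (nat \<Rightarrow> int) \<Rightarrow> int" where
  "dotp r v u = (\<Sum>i=1..r. v i * u i)"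

definition pos_roots :: "nat \<Rightarrow> (nat \<Rightarrow> int) set" where
  "pos_roots r = {eps i - eps j | i j. 1 \<le> i \<and> i < j \<and> j \<le> r}
               \<union> {eps i + eps j | i j. 1 \<le> i \<and> i \<le> j \<and> j \<le> r}"

definition roots :: "nat \<Rightarrow> (nat \<Rightarrow> int) set" where
  "roots r = pos_roots r \<union> uminus ` pos_roots r"

definition simple_root :: "nat \<Rightarrow> nat \<Rightarrow> (nat \<Rightarrow> int)" where
  "simple_root r i = (if i < r then eps i - eps (i+1) else 2 * eps r)"

text \<open>Dual basis x_1..x_r to the simple roots (pairing alpha_i(x_j) = delta_ij):
  x_j = eps_1 + ... + eps_j for j < r, and x_r = (eps_1 + ... + eps_r)/2.\<close>
definition coweight :: "nat \<Rightarrow> nat \<Rightarrow> (nat \<Rightarrow> rat)" where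
  "coweight r j = (\<lambda>i. if 1 \<le> i \<and> i \<le> r then (if j < r then (if i \<le> j then 1 else 0) else 1/2) else 0)"

definition pair :: "nat \<Rightarrow> (nat \<Rightarrow> int) \<Rightarrow> (nat \<Rightarrow> rat) \<Rightarrow> rat" where
  "pair r b x = (\<Sum>i=1..r. of_int (b i) * x i)"

text \<open>Reflection in the root a: s_a(v) = v - <v, a^vee> a  (exact division for roots).\<close>
definition refl :: "nat \<Rightarrow> (nat \<Rightarrow> int) \<Rightarrow> (nat \<Rightarrow> int) \<Rightarrow> (nat \<Rightarrow> int)" where
  "refl r a v = (\<lambda>i. v i - ((2 * dotp r v a) div (dotp r a a)) * a i)"

inductive_set weyl_group :: "nat \<Rightarrow> (nat \<Rightarrow> int) set \<Rightarrow> ((nat \<Rightarrow> int) \<Rightarrow> (nat \<Rightarrow> int)) set"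
  for r S where
  id_in: "id \<in> weyl_group r S"
| refl_in: "a \<in> S \<Longrightarrow> w \<in> weyl_group r S \<Longrightarrow> refl r a \<circ> w \<in> weyl_group r S"

definition len :: "(nat \<Rightarrow> int) set \<Rightarrow> ((nat \<Rightarrow> int) \<Rightarrow> (nat \<Rightarrow> int)) \<Rightarrow> nat" where
  "len Rp w = card {b \<in> Rp. w b \<notin> Rp}"

definition min_coset_reps where
  "min_coset_reps Rp Wbig Wsmall = {w \<in> Wbig. \<forall>v \<in> Wsmall. len Rp w \<le> len Rp (w \<circ> v)}"

text \<open>Roots of the Levi of the maximal parabolic P omitting alpha_k:
  roots on which x_k vanishes.\<close>
definition levi_roots :: "nat \<Rightarrow> nat \<Rightarrow> (nat \<Rightarrow> int) set" where
  "levi_roots r k = {b \<in> roots r. pair r b (coweight r k) = 0}"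

text \<open>tau = diag(-1,...,-1,1,...,1,-1,...,-1) is the torus element with
  t_i = -1 for i \<le> s and t_i = 1 for s < i \<le> r; a root b takes the value
  prod_i t_i^(b_i) = (-1)^(b_1+...+b_s) on tau.\<close>
definition trivial_on_tau :: "nat \<Rightarrow> (nat \<Rightarrow> int) \<Rightarrow> bool" where
  "trivial_on_tau s b \<longleftrightarrow> even (\<Sum>i=1..s. b i)"

definition M_roots :: "nat \<Rightarrow> nat \<Rightarrow> (nat \<Rightarrow> int) set" where
  "M_roots r s = {b \<in> roots r. trivial_on_tau s b}"

definition M_pos_roots :: "nat \<Rightarrow> nat \<Rightarrow> (nat \<Rightarrow> int) set" where
  "M_pos_roots r s = M_roots r s \<inter> pos_roots r"

definition chi :: "(nat \<Rightarrow> int) set \<Rightarrow> (nat \<Rightarrow> int) set \<Rightarrow> ((nat \<Rightarrow> int) \<Rightarrow> (nat \<Rightarrow> int)) \<Rightarrow> (nat \<Rightarrow> int)" where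
  "chi Rp RL w = (\<lambda>i. \<Sum>b \<in> {b \<in> Rp - RL. w b \<in> Rp}. b i)"

definition W_G where "W_G r = weyl_group r (roots r)"
definition W_M where "W_M r s = weyl_group r (M_roots r s)"
definition W_Q where "W_Q r s k = weyl_group r (M_roots r s \<inter> levi_roots r k)"
definition W_MQ where
  "W_MQ r s k = min_coset_reps (M_pos_roots r s) (W_M r s) (W_Q r s k)"

definition theta where
  "theta r k ws = pair r (chi (pos_roots r) (levi_roots r k) id
      - (\<Sum>w\<leftarrow>ws. chi (pos_roots r) (levi_roots r k) w)) (coweight r k)"
definition thetaM where
  "thetaM r s k ws = pair r (chi (M_pos_roots r s) (levi_roots r k) id
      - (\<Sum>w\<leftarrow>ws. chi (M_pos_roots r s) (levi_roots r k) w)) (coweight r k)"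

text \<open>dim G/P = |R^+ \ R_L^+|; Schubert cell C_w = BwP/P has dimension len(w).\<close>
definition dimGP where "dimGP r k = int (card (pos_roots r - levi_roots r k))"
definition dimMQ where "dimMQ r s k = int (card (M_pos_roots r s - levi_roots r k))"
definition codimG where "codimG r k w = dimGP r k - int (len (pos_roots r) w)"
definition codimM where "codimM r s k w = dimMQ r s k - int (len (M_pos_roots r s) w)"

definition expdimG where "expdimG r k ws = dimGP r k - (\<Sum>w\<leftarrow>ws. codimG r k w)"
definition expdimM where "expdimM r s k ws = dimMQ r s k - (\<Sum>w\<leftarrow>ws. codimM r s k w)"

end

theory Submission
  imports Defs "HOL-Combinatorics.Transposition"
begin

text \<open>Every root of Sp(2r) has the form \<open>x eps_i + y eps_j\<close> with signs \<open>x, y\<close>, and \<open>W_M\<close>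
  acts on such vectors by signed permutations of the coordinates preserving the blocks
  \<open>{1..s}\<close> and \<open>{s+1..r}\<close>. The positive roots of G that lie neither in M nor in the Levi
  are the \<open>eps_i \<plusminus> eps_j\<close> with \<open>i \<le> s < j\<close>, and each pairs to 1 with \<open>x_k\<close>. Hence for
  every \<open>w \<in> W_M\<close> the difference \<open>(\<chi>_w - \<chi>^M_w)(x_k)\<close> counts those of them that \<open>w\<close> keeps
  positive. The difference of codimensions counts the same roots, because the Levi roots
  \<open>eps_i \<plusminus> eps_j\<close> with \<open>k < i \<le> s < j\<close> are also kept positive: minimality of \<open>w\<close> in its
  \<open>W_Q\<close>-coset makes \<open>w\<close> send the simple roots \<open>eps_i - eps_(i+1)\<close> (\<open>k < i < s\<close>) and \<open>2 eps_s\<close>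
  to positive roots, which forces the signs of \<open>w\<close> on the coordinates \<open>k+1..s\<close> to be \<open>+1\<close>.\<close>

definition root_vec :: "nat \<Rightarrow> nat \<Rightarrow> int \<Rightarrow> int \<Rightarrow> nat \<Rightarrow> int" where
  "root_vec i j x y = (\<lambda>l. x * eps i l + y * eps j l)"

text \<open>For \<open>i = j\<close> this describes the long root \<open>2x eps_i\<close>.\<close>
definition root_data :: "nat \<Rightarrow> nat \<Rightarrow> nat \<Rightarrow> int \<Rightarrow> int \<Rightarrow> bool" where
  "root_data r i j x y \<longleftrightarrow> 1 \<le> i \<and> i \<le> r \<and> 1 \<le> j \<and> j \<le> r \<and> (x = 1 \<or> x = -1) \<and> (y = 1 \<or> y = -1)
     \<and> (i = j \<longrightarrow> x = y)"

lemma root_vec_apply: "root_vec i j x y l = (if l = i then x else 0) + (if l = j then y else 0)"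
  by (simp add: root_vec_def eps_def)

lemma sum_root_vec:
  "finite A \<Longrightarrow> (\<Sum>l\<in>A. root_vec i j x y l) = (if i \<in> A then x else 0) + (if j \<in> A then y else 0)"
  by (simp add: root_vec_apply sum.distrib)

lemma uminus_root_vec: "- root_vec i j x y = root_vec i j (-x) (-y)"
  by (auto simp: root_vec_def fun_eq_iff)

lemma root_vec_swap: "root_vec i j x y = root_vec j i y x"
  by (auto simp: root_vec_def fun_eq_iff)

lemma root_data_swap: "root_data r i j x y \<Longrightarrow> root_data r j i y x"
  by (auto simp: root_data_def)

lemma root_data_uminus: "root_data r i j x y \<Longrightarrow> root_data r i j (-x) (-y)"
  by (auto simp: root_data_def)

lemma pos_roots_iff: "b \<in> pos_roots r \<longleftrightarrow> (\<exists>i j y. root_data r i j 1 y \<and> i \<le> j \<and> b = root_vec i j 1 y)"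
proof
  assume "b \<in> pos_roots r"
  then show "\<exists>i j y. root_data r i j 1 y \<and> i \<le> j \<and> b = root_vec i j 1 y"
    unfolding pos_roots_def
  proof (elim UnE CollectE exE conjE)
    fix i j assume h: "b = eps i - eps j" "1 \<le> i" "i < j" "j \<le> r"
    then have "b = root_vec i j 1 (-1)" by (auto simp: root_vec_def fun_eq_iff)
    with h show ?thesis by (intro exI[of _ i] exI[of _ j] exI[of _ "-1"]) (auto simp: root_data_def)
  next
    fix i j assume h: "b = eps i + eps j" "1 \<le> i" "i \<le> j" "j \<le> r"
    then have "b = root_vec i j 1 1" by (auto simp: root_vec_def fun_eq_iff)
    with h show ?thesis by (intro exI[of _ i] exI[of _ j] exI[of _ "1"]) (auto simp: root_data_def)
  qed
next
  assume "\<exists>i j y. root_data r i j 1 y \<and> i \<le> j \<and> b = root_vec i j 1 y"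
  then obtain i j y where h: "root_data r i j 1 y" "i \<le> j" "b = root_vec i j 1 y" by blast
  show "b \<in> pos_roots r"
  proof (cases "y = 1")
    case True
    then have "b = eps i + eps j" using h by (auto simp: root_vec_def fun_eq_iff)
    then show ?thesis using h unfolding pos_roots_def root_data_def by blast
  next
    case False
    then have "y = -1" "i < j" using h by (auto simp: root_data_def)
    then have "b = eps i - eps j" using h by (auto simp: root_vec_def fun_eq_iff)
    then show ?thesis using h \<open>i < j\<close> unfolding pos_roots_def root_data_def by blast
  qed
qed

lemma root_vec_first_coeff_eq:
  assumes "root_data r p q x y" "root_data r i j x' y'" "p \<le> q" "i \<le> j"
    and "root_vec p q x y = root_vec i j x' y'"
  shows "x = x'"
proof -
  have "root_vec p q x y p = root_vec i j x' y' p" "root_vec p q x y i = root_vec i j x' y' i"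
    using assms(5) by auto
  then show ?thesis using assms(1-4) unfolding root_vec_apply root_data_def by (auto split: if_splits)
qed

lemma root_vec_in_pos_roots_iff:
  assumes "root_data r p q x y"
  shows "root_vec p q x y \<in> pos_roots r \<longleftrightarrow> (p \<le> q \<and> x = 1) \<or> (q < p \<and> y = 1)"
proof
  assume "root_vec p q x y \<in> pos_roots r"
  then obtain i j y' where h: "root_data r i j 1 y'" "i \<le> j" "root_vec p q x y = root_vec i j 1 y'"
    by (auto simp: pos_roots_iff)
  show "(p \<le> q \<and> x = 1) \<or> (q < p \<and> y = 1)"
  proof (cases "p \<le> q")
    case True then show ?thesis using root_vec_first_coeff_eq[OF assms h(1) True h(2,3)] by simp
  next
    case False
    then have "y = 1"
      using root_vec_first_coeff_eq[OF root_data_swap[OF assms] h(1) _ h(2)] h(3)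
      by (simp add: root_vec_swap[of p])
    with False show ?thesis by simp
  qed
next
  assume "(p \<le> q \<and> x = 1) \<or> (q < p \<and> y = 1)"
  then show "root_vec p q x y \<in> pos_roots r"
  proof (elim disjE conjE)
    assume "p \<le> q" "x = 1"
    then show ?thesis using assms by (auto simp: pos_roots_iff)
  next
    assume "q < p" "y = 1"
    then show ?thesis using root_data_swap[OF assms] unfolding pos_roots_iff root_vec_swap[of p]
      by (intro exI[of _ q] exI[of _ p] exI[of _ x]) auto
  qed
qed

lemma roots_iff: "b \<in> roots r \<longleftrightarrow> (\<exists>i j x y. root_data r i j x y \<and> b = root_vec i j x y)"
proof
  assume "b \<in> roots r"
  then show "\<exists>i j x y. root_data r i j x y \<and> b = root_vec i j x y"
    unfolding roots_def
  proof
    assume "b \<in> pos_roots r" then show ?thesis by (auto simp: pos_roots_iff)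
  next
    assume "b \<in> uminus ` pos_roots r"
    then obtain i j y where "root_data r i j 1 y" "b = - root_vec i j 1 y" by (auto simp: pos_roots_iff)
    then show ?thesis unfolding uminus_root_vec using root_data_uminus by blast
  qed
next
  assume "\<exists>i j x y. root_data r i j x y \<and> b = root_vec i j x y"
  then obtain i j x y where h: "root_data r i j x y" "b = root_vec i j x y" by blast
  show "b \<in> roots r"
  proof (cases "b \<in> pos_roots r")
    case False
    then have "\<not> ((i \<le> j \<and> x = 1) \<or> (j < i \<and> y = 1))"
      using h root_vec_in_pos_roots_iff by blast
    then have "(i \<le> j \<and> -x = 1) \<or> (j < i \<and> -y = 1)" using h(1) by (auto simp: root_data_def)
    then have "- b \<in> pos_roots r"
      using h(2) root_vec_in_pos_roots_iff[OF root_data_uminus[OF h(1)]] by (simp add: uminus_root_vec)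
    then have "b \<in> uminus ` pos_roots r" by (metis image_eqI minus_minus)
    then show ?thesis unfolding roots_def by blast
  qed (simp add: roots_def)
qed

lemma uminus_pos_roots_not_pos: "b \<in> pos_roots r \<Longrightarrow> - b \<notin> pos_roots r"
proof
  assume "b \<in> pos_roots r" "- b \<in> pos_roots r"
  then obtain i j y where h: "root_data r i j 1 y" "i \<le> j" "b = root_vec i j 1 y"
    by (auto simp: pos_roots_iff)
  have "- b = root_vec i j (-1) (-y)" using h(3) by (simp add: uminus_root_vec)
  then show False
    using root_vec_in_pos_roots_iff[OF root_data_uminus[OF h(1)]] \<open>- b \<in> pos_roots r\<close> h(2) by auto
qed

lemma finite_pos_roots: "finite (pos_roots r)"
proof -
  have "pos_roots r \<subseteq> (\<lambda>(i, j, y). root_vec i j 1 y) ` ({1..r} \<times> {1..r} \<times> {1, -1})"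
  proof
    fix b assume "b \<in> pos_roots r"
    then obtain i j y where h: "root_data r i j 1 y" "b = root_vec i j 1 y" by (auto simp: pos_roots_iff)
    then have "(i, j, y) \<in> {1..r} \<times> {1..r} \<times> {1, -1}" by (auto simp: root_data_def)
    then show "b \<in> (\<lambda>(i, j, y). root_vec i j 1 y) ` ({1..r} \<times> {1..r} \<times> {1, -1})"
      using h(2) by (auto intro!: image_eqI[of _ _ "(i, j, y)"])
  qed
  then show ?thesis by (rule finite_subset) auto
qed

lemma trivial_on_tau_root_vec:
  "root_data r i j x y \<Longrightarrow> trivial_on_tau s (root_vec i j x y) \<longleftrightarrow> (i \<le> s \<longleftrightarrow> j \<le> s)"
  unfolding trivial_on_tau_def by (subst sum_root_vec) (auto simp: root_data_def)

lemma M_roots_iff: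
  "b \<in> M_roots r s \<longleftrightarrow> (\<exists>i j x y. root_data r i j x y \<and> (i \<le> s \<longleftrightarrow> j \<le> s) \<and> b = root_vec i j x y)"
  unfolding M_roots_def roots_iff using trivial_on_tau_root_vec by blast

lemma M_pos_roots_iff:
  "b \<in> M_pos_roots r s \<longleftrightarrow> (\<exists>p q x y. root_data r p q x y \<and> (p \<le> s \<longleftrightarrow> q \<le> s)
     \<and> ((p \<le> q \<and> x = 1) \<or> (q < p \<and> y = 1)) \<and> b = root_vec p q x y)"
  unfolding M_pos_roots_def Int_iff M_roots_iff using root_vec_in_pos_roots_iff by blast

lemma uminus_M_root_pos: "b \<in> M_roots r s \<Longrightarrow> b \<notin> M_pos_roots r s \<Longrightarrow> - b \<in> M_pos_roots r s"
proof -
  assume "b \<in> M_roots r s" "b \<notin> M_pos_roots r s"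
  then obtain i j x y where h: "root_data r i j x y" "(i \<le> s \<longleftrightarrow> j \<le> s)" "b = root_vec i j x y"
    by (auto simp: M_roots_iff)
  have "\<not> ((i \<le> j \<and> x = 1) \<or> (j < i \<and> y = 1))" using h \<open>b \<notin> M_pos_roots r s\<close> M_pos_roots_iff by blast
  then have "(i \<le> j \<and> -x = 1) \<or> (j < i \<and> -y = 1)" using h(1) by (auto simp: root_data_def)
  then show ?thesis unfolding M_pos_roots_iff using root_data_uminus[OF h(1)] h(2,3) uminus_root_vec by metis
qed

lemma finite_M_pos_roots: "finite (M_pos_roots r s)"
  unfolding M_pos_roots_def using finite_pos_roots by blast

lemma pair_coweight: "k < r \<Longrightarrow> pair r b (coweight r k) = of_int (\<Sum>l\<in>{1..k}. b l)"
proof -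
  assume k: "k < r"
  have "pair r b (coweight r k) = (\<Sum>l\<in>{1..r}. if l \<le> k then of_int (b l) else 0)"
    unfolding pair_def coweight_def using k by (intro sum.cong) auto
  also have "\<dots> = (\<Sum>l\<in>{l\<in>{1..r}. l \<le> k}. of_int (b l))"
    using sum.inter_filter[of "{1..r}" "\<lambda>l. of_int (b l) :: rat" "\<lambda>l. l \<le> k"] by simp
  also have "{l\<in>{1..r}. l \<le> k} = {1..k}" using k by auto
  finally show ?thesis by simp
qed

lemma pair_root_vec_coweight:
  "k < r \<Longrightarrow> root_data r i j x y \<Longrightarrow>
     pair r (root_vec i j x y) (coweight r k) = of_int ((if i \<le> k then x else 0) + (if j \<le> k then y else 0))"
  by (simp add: pair_coweight sum_root_vec root_data_def)


lemma dotp_root_vec: "root_data r i j x y \<Longrightarrow> dotp r v (root_vec i j x y) = x * v i + y * v j"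
proof -
  assume o: "root_data r i j x y"
  have "dotp r v (root_vec i j x y)
      = (\<Sum>l\<in>{1..r}. x * (if l = i then v l else 0) + y * (if l = j then v l else 0))"
    unfolding dotp_def root_vec_apply by (intro sum.cong) (auto simp: algebra_simps)
  also have "\<dots> = x * v i + y * v j" using o
    by (simp add: sum.distrib sum_distrib_left[symmetric] root_data_def)
  finally show ?thesis .
qed

lemma refl_root_vec:
  assumes "root_data r i j x y"
  shows "refl r (root_vec i j x y) = (\<lambda>v l. (if l = i \<or> l = j then - x * y else 1) * v (transpose i j l))"
proof (intro ext)
  fix v l
  have norm: "dotp r (root_vec i j x y) (root_vec i j x y) = (if i = j then 4 else 2)"
    using assms by (simp add: dotp_root_vec) (auto simp: root_vec_apply root_data_def)
  define q where "q = (if i = j then x * v i else x * v i + y * v j)"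
  have "2 * dotp r v (root_vec i j x y) div dotp r (root_vec i j x y) (root_vec i j x y)
      = 2 * (x * v i + y * v j) div (if i = j then 4 else 2)"
    unfolding norm unfolding dotp_root_vec[OF assms] ..
  also have "\<dots> = q"
  proof (cases "i = j")
    case True
    then have "y = x" using assms by (auto simp: root_data_def)
    then have "2 * (x * v i + y * v j) = 4 * (x * v i)" using True by simp
    then show ?thesis using True unfolding q_def by (simp only: if_True simp_thms)
  qed (simp add: q_def)
  finally show "refl r (root_vec i j x y) v l = (if l = i \<or> l = j then - x * y else 1) * v (transpose i j l)"
    using assms unfolding refl_def q_def
    by (auto simp: root_vec_apply transpose_def root_data_def algebra_simps)
qed

lemma refl_root_vec_self: "root_data r i j x y \<Longrightarrow> refl r (root_vec i j x y) (root_vec i j x y) = - root_vec i j x y"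
  unfolding refl_root_vec uminus_root_vec by (auto simp: fun_eq_iff root_vec_apply transpose_def root_data_def)

lemma refl_root_vec_root_vec:
  "root_data r i j x y \<Longrightarrow> refl r (root_vec i j x y) (root_vec p q x' y') =
     root_vec (transpose i j p) (transpose i j q)
       (x' * (if transpose i j p = i \<or> transpose i j p = j then - x * y else 1))
       (y' * (if transpose i j q = i \<or> transpose i j q = j then - x * y else 1))"
  unfolding refl_root_vec by (auto simp: fun_eq_iff root_vec_apply transpose_def algebra_simps)

lemma refl_root_vec_involutive: "root_data r i j x y \<Longrightarrow> refl r (root_vec i j x y) (refl r (root_vec i j x y) v) = v"
  unfolding refl_root_vec by (auto simp: fun_eq_iff transpose_def root_data_def)

lemma root_data_transpose:
  assumes "root_data r p q x y" "1 \<le> i" "i \<le> r" "1 \<le> j" "j \<le> r"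
  shows "root_data r (transpose i j p) (transpose i j q) x y"
proof -
  have "1 \<le> transpose i j l \<and> transpose i j l \<le> r \<longleftrightarrow> 1 \<le> l \<and> l \<le> r" for l
    using assms(2-5) by (auto simp: transpose_def)
  then show ?thesis using assms(1) transpose_eq_imp_eq[of i j p q] unfolding root_data_def by blast
qed

text \<open>Data of the signed permutation \<open>v \<mapsto> (\<lambda>j. c j * v (g j))\<close>; \<open>f\<close> is the inverse of \<open>g\<close>.\<close>
definition block_signed_perm :: "nat \<Rightarrow> nat \<Rightarrow> (nat \<Rightarrow> nat) \<Rightarrow> (nat \<Rightarrow> nat) \<Rightarrow> (nat \<Rightarrow> int) \<Rightarrow> bool" where
  "block_signed_perm r s g f c \<longleftrightarrow> (\<forall>j. g (f j) = j) \<and> (\<forall>j. f (g j) = j)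
     \<and> (\<forall>j. (1 \<le> g j \<and> g j \<le> r) = (1 \<le> j \<and> j \<le> r)) \<and> (\<forall>j. (g j \<le> s) = (j \<le> s))
     \<and> (\<forall>j. c j = 1 \<or> c j = -1)"

lemma block_signed_perm_refl:
  assumes "block_signed_perm r s g f c" "root_data r i j x y" "i \<le> s \<longleftrightarrow> j \<le> s"
  defines "d \<equiv> \<lambda>l. if l = i \<or> l = j then - x * y else 1"
  shows "block_signed_perm r s (g \<circ> transpose i j) (transpose i j \<circ> f) (\<lambda>l. d l * c (transpose i j l))"
proof -
  have g: "\<forall>j. g (f j) = j" "\<forall>j. f (g j) = j" "\<forall>j. (1 \<le> g j \<and> g j \<le> r) = (1 \<le> j \<and> j \<le> r)"
    "\<forall>j. (g j \<le> s) = (j \<le> s)" "\<forall>j. c j = 1 \<or> c j = -1"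
    using assms(1) unfolding block_signed_perm_def by blast+
  have i: "1 \<le> i" "i \<le> r" "1 \<le> j" "j \<le> r" "x = 1 \<or> x = -1" "y = 1 \<or> y = -1"
    using assms(2) unfolding root_data_def by blast+
  have "(1 \<le> (g \<circ> transpose i j) l \<and> (g \<circ> transpose i j) l \<le> r) = (1 \<le> l \<and> l \<le> r)" for l
    using g(3) i(1-4) by (simp add: transpose_def)
  moreover have "((g \<circ> transpose i j) l \<le> s) = (l \<le> s)" for l
    using g(4) assms(3) by (simp add: transpose_def)
  moreover have "d l * c (transpose i j l) = 1 \<or> d l * c (transpose i j l) = -1" for l
    using g(5)[rule_format, of "transpose i j l"] i(5,6) unfolding d_def by auto
  ultimately show ?thesis using g(1,2) unfolding block_signed_perm_def by simp
qed

lemma W_M_block_signed_perm: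
  "w \<in> W_M r s \<Longrightarrow> \<exists>g f c. block_signed_perm r s g f c \<and> w = (\<lambda>v j. c j * v (g j))"
  unfolding W_M_def
proof (induction rule: weyl_group.induct)
  case id_in
  have "block_signed_perm r s id id (\<lambda>_. 1)" by (simp add: block_signed_perm_def)
  then show ?case by (intro exI[of _ id] exI[of _ id] exI[of _ "\<lambda>_. 1"]) (simp add: fun_eq_iff id_def)
next
  case (refl_in a w)
  then obtain i j x y g f c where a: "root_data r i j x y" "i \<le> s \<longleftrightarrow> j \<le> s" "a = root_vec i j x y"
    and w: "block_signed_perm r s g f c" "w = (\<lambda>v j. c j * v (g j))"
    by (auto simp: M_roots_iff)
  define d where "d = (\<lambda>l. if l = i \<or> l = j then - x * y else 1)"
  have "refl r a \<circ> w = (\<lambda>v l. (d l * c (transpose i j l)) * v ((g \<circ> transpose i j) l))"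
    unfolding a(3) refl_root_vec[OF a(1)] w(2) d_def by (auto simp: fun_eq_iff)
  then show ?case using block_signed_perm_refl[OF w(1) a(1,2)] unfolding d_def by blast
qed

lemma block_signed_perm_root_vec:
  assumes "block_signed_perm r s g f c"
  shows "(\<lambda>j. c j * root_vec p q x y (g j)) = root_vec (f p) (f q) (x * c (f p)) (y * c (f q))"
proof -
  have "g l = p \<longleftrightarrow> l = f p" for l p using assms unfolding block_signed_perm_def by metis
  then show ?thesis by (auto simp: fun_eq_iff root_vec_apply algebra_simps)
qed

lemma block_signed_perm_root_data:
  assumes "block_signed_perm r s g f c" "root_data r p q x y"
  shows "root_data r (f p) (f q) (x * c (f p)) (y * c (f q))"
proof -
  have inj: "f p = f q \<longleftrightarrow> p = q" using assms(1) unfolding block_signed_perm_def by metis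
  have range: "(1 \<le> f j \<and> f j \<le> r) = (1 \<le> j \<and> j \<le> r)" for j
    using assms(1) unfolding block_signed_perm_def by metis
  have sign: "c j = 1 \<or> c j = -1" for j using assms(1) unfolding block_signed_perm_def by blast
  show ?thesis using assms(2) inj range[of p] range[of q] sign[of "f p"] sign[of "f q"]
    unfolding root_data_def by auto
qed

lemma block_signed_perm_inv_le_iff: "block_signed_perm r s g f c \<Longrightarrow> (f j \<le> s) = (j \<le> s)"
  unfolding block_signed_perm_def by metis

lemma block_signed_perm_M_roots:
  assumes "block_signed_perm r s g f c" "b \<in> M_roots r s"
  shows "(\<lambda>j. c j * b (g j)) \<in> M_roots r s"
proof -
  obtain i j x y where h: "root_data r i j x y" "(i \<le> s \<longleftrightarrow> j \<le> s)" "b = root_vec i j x y"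
    using assms(2) by (auto simp: M_roots_iff)
  show ?thesis unfolding h(3) block_signed_perm_root_vec[OF assms(1)] M_roots_iff
    using block_signed_perm_root_data[OF assms(1) h(1)] h(2) block_signed_perm_inv_le_iff[OF assms(1)]
    by blast
qed

lemma W_M_maps_M_pos_roots: "w \<in> W_M r s \<Longrightarrow> b \<in> M_pos_roots r s \<Longrightarrow> w b \<in> M_roots r s"
  using W_M_block_signed_perm[of w r s] block_signed_perm_M_roots[of r s _ _ _ b]
  unfolding M_pos_roots_def by auto


lemma len_comp_involution_less:
  assumes "finite P" "\<alpha> \<in> P" and \<sigma>: "\<forall>b\<in>P - {\<alpha>}. \<sigma> b \<in> P - {\<alpha>}" "\<forall>v. \<sigma> (\<sigma> v) = v"
    and "w (\<sigma> \<alpha>) \<in> P" "w \<alpha> \<notin> P"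
  shows "len P (w \<circ> \<sigma>) < len P w"
proof -
  define A where "A = {b \<in> P. w b \<notin> P}"
  define B where "B = {b \<in> P. (w \<circ> \<sigma>) b \<notin> P}"
  have "\<sigma> ` B \<subseteq> A - {\<alpha>}"
  proof
    fix z assume "z \<in> \<sigma> ` B"
    then obtain b where b: "b \<in> B" "z = \<sigma> b" by blast
    then have "b \<noteq> \<alpha>" using assms(5) unfolding B_def by auto
    then show "z \<in> A - {\<alpha>}" using b \<sigma>(1) unfolding A_def B_def by auto
  qed
  moreover have "inj_on \<sigma> B" by (metis \<sigma>(2) inj_onI)
  moreover have "finite A" using assms(1) unfolding A_def by auto
  ultimately have "card B \<le> card (A - {\<alpha>})"
    by (metis card_image card_mono finite_Diff)
  moreover have "\<alpha> \<in> A" using assms(2,6) unfolding A_def by auto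
  then have "card (A - {\<alpha>}) < card A" using \<open>finite A\<close> by (meson card_Diff1_less)
  ultimately show ?thesis unfolding len_def A_def B_def by linarith
qed

lemma refl_permutes_M_pos_roots_minus:
  assumes o: "root_data r i j x y" and \<alpha>: "root_vec i j x y \<in> M_pos_roots r s"
    and maps: "\<And>b. b \<in> M_pos_roots r s \<Longrightarrow> b \<noteq> root_vec i j x y \<Longrightarrow> refl r (root_vec i j x y) b \<in> M_pos_roots r s"
  shows "\<forall>b\<in>M_pos_roots r s - {root_vec i j x y}. refl r (root_vec i j x y) b \<in> M_pos_roots r s - {root_vec i j x y}"
proof
  fix b assume b: "b \<in> M_pos_roots r s - {root_vec i j x y}"
  have "refl r (root_vec i j x y) b \<noteq> root_vec i j x y"
  proof
    assume "refl r (root_vec i j x y) b = root_vec i j x y"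
    then have "b = - root_vec i j x y" using refl_root_vec_involutive[OF o, of b] refl_root_vec_self[OF o] by metis
    then show False using b \<alpha> uminus_pos_roots_not_pos unfolding M_pos_roots_def by blast
  qed
  then show "refl r (root_vec i j x y) b \<in> M_pos_roots r s - {root_vec i j x y}" using maps b by blast
qed

lemma refl_eps_diff_permutes_M_pos_roots:
  assumes "1 \<le> i" "i + 1 \<le> s" "s \<le> r"
  defines "\<alpha> \<equiv> root_vec i (i + 1) 1 (-1)"
  shows "\<forall>b\<in>M_pos_roots r s - {\<alpha>}. refl r \<alpha> b \<in> M_pos_roots r s - {\<alpha>}"
  unfolding \<alpha>_def
proof (rule refl_permutes_M_pos_roots_minus)
  show o: "root_data r i (i + 1) 1 (-1)" using assms by (auto simp: root_data_def)
  show "root_vec i (i + 1) 1 (-1) \<in> M_pos_roots r s" unfolding M_pos_roots_iff using o assms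
    by (intro exI[of _ i] exI[of _ "i + 1"] exI[of _ 1] exI[of _ "-1"]) auto
  fix b assume b: "b \<in> M_pos_roots r s" "b \<noteq> root_vec i (i + 1) 1 (-1)"
  then obtain p q x y where h: "root_data r p q x y" "(p \<le> s \<longleftrightarrow> q \<le> s)"
      "(p \<le> q \<and> x = 1) \<or> (q < p \<and> y = 1)" "b = root_vec p q x y"
    unfolding M_pos_roots_iff by blast
  have ne: "\<not> (p = i \<and> q = Suc i \<and> x = 1 \<and> y = -1)" "\<not> (q = i \<and> p = Suc i \<and> y = 1 \<and> x = -1)"
    using b(2) h(4) root_vec_swap by auto
  let ?t = "transpose i (Suc i)"
  have "refl r (root_vec i (i + 1) 1 (-1)) b = root_vec (?t p) (?t q) x y"
    unfolding h(4) refl_root_vec_root_vec[OF o] by simp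
  moreover have "root_data r (?t p) (?t q) x y" using root_data_transpose[OF h(1)] assms by simp
  moreover have "?t p \<le> s \<longleftrightarrow> ?t q \<le> s" using h(2) assms(2) by (auto simp: transpose_def)
  moreover have "(?t p \<le> ?t q \<and> x = 1) \<or> (?t q < ?t p \<and> y = 1)"
  proof -
    have order: "?t p' < ?t q'" if "p' < q'" "\<not> (p' = i \<and> q' = Suc i)" for p' q'
      using that by (auto simp: transpose_def)
    consider "p < q" | "p = q" | "q < p" by linarith
    then show ?thesis
    proof cases
      case 1
      show ?thesis
      proof (cases "p = i \<and> q = Suc i")
        case True
        then have "x = 1" "y = 1" using h(1,3) ne(1) 1 unfolding root_data_def by auto
        then show ?thesis using True by simp
      qed (use order[OF 1] h(3) 1 in auto)
    next
      case 2 then show ?thesis using h(3) by auto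
    next
      case 3
      show ?thesis
      proof (cases "q = i \<and> p = Suc i")
        case True
        then have "y = 1" "x = 1" using h(1,3) ne(2) 3 unfolding root_data_def by auto
        then show ?thesis using True by simp
      qed (use order[OF 3] h(3) 3 in auto)
    qed
  qed
  ultimately show "refl r (root_vec i (i + 1) 1 (-1)) b \<in> M_pos_roots r s" unfolding M_pos_roots_iff by auto
qed

lemma refl_two_eps_permutes_M_pos_roots:
  assumes "1 \<le> s" "s \<le> r"
  defines "\<alpha> \<equiv> root_vec s s 1 1"
  shows "\<forall>b\<in>M_pos_roots r s - {\<alpha>}. refl r \<alpha> b \<in> M_pos_roots r s - {\<alpha>}"
  unfolding \<alpha>_def
proof (rule refl_permutes_M_pos_roots_minus)
  show o: "root_data r s s 1 1" using assms by (auto simp: root_data_def)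
  show "root_vec s s 1 1 \<in> M_pos_roots r s" unfolding M_pos_roots_iff using o assms
    by (intro exI[of _ s] exI[of _ s] exI[of _ 1] exI[of _ 1]) auto
  fix b assume b: "b \<in> M_pos_roots r s" "b \<noteq> root_vec s s 1 1"
  then obtain p q x y where h: "root_data r p q x y" "(p \<le> s \<longleftrightarrow> q \<le> s)"
      "(p \<le> q \<and> x = 1) \<or> (q < p \<and> y = 1)" "b = root_vec p q x y"
    unfolding M_pos_roots_iff by blast
  have ne: "\<not> (p = s \<and> q = s)"
  proof
    assume "p = s \<and> q = s"
    then have "x = 1" "y = x" using h(1,3) unfolding root_data_def by auto
    then show False using b(2) h(4) \<open>p = s \<and> q = s\<close> by simp
  qed
  define x' where "x' = (if p = s then -x else x)"
  define y' where "y' = (if q = s then -y else y)"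
  have "refl r (root_vec s s 1 1) b = root_vec p q x' y'"
    unfolding h(4) refl_root_vec_root_vec[OF o] x'_def y'_def by (simp add: transpose_def)
  moreover have "root_data r p q x' y'" using h(1) ne unfolding root_data_def x'_def y'_def by auto
  moreover have "(p \<le> q \<and> x' = 1) \<or> (q < p \<and> y' = 1)"
    using h(2,3) ne unfolding x'_def y'_def by auto
  ultimately show "refl r (root_vec s s 1 1) b \<in> M_pos_roots r s" unfolding M_pos_roots_iff using h(2) by blast
qed

text \<open>Otherwise composing \<open>w\<close> with the reflection, an element of \<open>W_Q\<close>, would shorten it.\<close>
lemma W_MQ_maps_simple_root_pos:
  assumes w: "w \<in> W_MQ r s k" and o: "root_data r i j x y" and \<alpha>: "root_vec i j x y \<in> M_pos_roots r s"
    and levi: "root_vec i j x y \<in> levi_roots r k"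
    and \<sigma>: "\<forall>b\<in>M_pos_roots r s - {root_vec i j x y}.
              refl r (root_vec i j x y) b \<in> M_pos_roots r s - {root_vec i j x y}"
  shows "w (root_vec i j x y) \<in> M_pos_roots r s"
proof (rule ccontr)
  assume neg: "w (root_vec i j x y) \<notin> M_pos_roots r s"
  define a where "a = root_vec i j x y"
  have wM: "w \<in> W_M r s"
    and minimal: "\<forall>v\<in>W_Q r s k. len (M_pos_roots r s) w \<le> len (M_pos_roots r s) (w \<circ> v)"
    using w unfolding W_MQ_def min_coset_reps_def by auto
  have "a \<in> M_roots r s \<inter> levi_roots r k" using \<alpha> levi unfolding a_def M_pos_roots_def by auto
  then have "refl r a \<circ> id \<in> W_Q r s k" unfolding W_Q_def
    by (rule weyl_group.refl_in[OF _ weyl_group.id_in])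
  then have le: "len (M_pos_roots r s) w \<le> len (M_pos_roots r s) (w \<circ> refl r a)" using minimal by auto
  obtain g f c where sp: "block_signed_perm r s g f c" "w = (\<lambda>v j. c j * v (g j))"
    using W_M_block_signed_perm[OF wM] by blast
  have "w (refl r a a) = - w a" unfolding a_def refl_root_vec_self[OF o] sp(2) by (auto simp: fun_eq_iff)
  moreover have "w a \<in> M_roots r s" using W_M_maps_M_pos_roots[OF wM \<alpha>] unfolding a_def .
  ultimately have "w (refl r a a) \<in> M_pos_roots r s" using uminus_M_root_pos neg a_def by simp
  then have "len (M_pos_roots r s) (w \<circ> refl r a) < len (M_pos_roots r s) w"
    using len_comp_involution_less[OF finite_M_pos_roots, where \<alpha>=a and \<sigma>="refl r a" and w=w]
      \<alpha> \<sigma> refl_root_vec_involutive[OF o] neg unfolding a_def by blast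
  with le show False by simp
qed

lemma root_vec_in_levi_roots:
  "k < r \<Longrightarrow> root_data r i j x y \<Longrightarrow> (if i \<le> k then x else 0) + (if j \<le> k then y else 0) = 0 \<Longrightarrow>
     root_vec i j x y \<in> levi_roots r k"
  unfolding levi_roots_def roots_iff using pair_root_vec_coweight by auto

text \<open>Downward induction from \<open>s\<close>: \<open>w (2 eps_s)\<close> positive gives the sign at \<open>s\<close>, and then
  \<open>w (eps_n - eps_(n+1))\<close> positive transfers the sign \<open>+1\<close> from \<open>n + 1\<close> to \<open>n\<close>.\<close>
lemma W_MQ_sign_eq_1:
  assumes w: "w \<in> W_MQ r s k" and ks: "k \<le> s" "s < r"
    and sp: "block_signed_perm r s g f c" "w = (\<lambda>v j. c j * v (g j))"
    and i: "k < i" "i \<le> s"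
  shows "c (f i) = 1"
proof -
  have w_root_vec: "w (root_vec p q x y) = root_vec (f p) (f q) (x * c (f p)) (y * c (f q))" for p q x y
    unfolding sp(2) block_signed_perm_root_vec[OF sp(1)] ..
  show ?thesis using i(2)
  proof (induction i rule: inc_induct)
    case base
    have o: "root_data r s s 1 1" using i ks by (auto simp: root_data_def)
    have "root_vec s s 1 1 \<in> M_pos_roots r s" unfolding M_pos_roots_iff using o
      by (intro exI[of _ s] exI[of _ s] exI[of _ 1] exI[of _ 1]) auto
    moreover have "root_vec s s 1 1 \<in> levi_roots r k" using root_vec_in_levi_roots[OF _ o] i ks by auto
    ultimately have "w (root_vec s s 1 1) \<in> M_pos_roots r s"
      using W_MQ_maps_simple_root_pos[OF w o] refl_two_eps_permutes_M_pos_roots i ks by auto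
    then have "root_vec (f s) (f s) (c (f s)) (c (f s)) \<in> pos_roots r"
      unfolding w_root_vec M_pos_roots_def by simp
    moreover have "root_data r (f s) (f s) (c (f s)) (c (f s))"
      using block_signed_perm_root_data[OF sp(1) o] by simp
    ultimately show ?case using root_vec_in_pos_roots_iff by auto
  next
    case (step n)
    have o: "root_data r n (n + 1) 1 (-1)" using step i ks by (auto simp: root_data_def)
    have "root_vec n (n + 1) 1 (-1) \<in> M_pos_roots r s" unfolding M_pos_roots_iff using o step
      by (intro exI[of _ n] exI[of _ "n + 1"] exI[of _ 1] exI[of _ "-1"]) auto
    moreover have "root_vec n (n + 1) 1 (-1) \<in> levi_roots r k"
      using root_vec_in_levi_roots[OF _ o] step i ks by auto
    moreover have "1 \<le> n" "n + 1 \<le> s" "s \<le> r" using step i ks by auto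
    ultimately have "w (root_vec n (n + 1) 1 (-1)) \<in> M_pos_roots r s"
      using W_MQ_maps_simple_root_pos[OF w o] refl_eps_diff_permutes_M_pos_roots[of n s r] by simp
    then have "root_vec (f n) (f (n + 1)) (c (f n)) (-1) \<in> pos_roots r"
      using step.IH unfolding w_root_vec M_pos_roots_def by simp
    moreover have "root_data r (f n) (f (n + 1)) (c (f n)) (-1)"
      using block_signed_perm_root_data[OF sp(1) o] step.IH by simp
    ultimately show ?case using root_vec_in_pos_roots_iff by fastforce
  qed
qed

abbreviation cross_roots :: "nat \<Rightarrow> nat \<Rightarrow> nat \<Rightarrow> (nat \<Rightarrow> int) set" where
  "cross_roots r s k \<equiv> pos_roots r - levi_roots r k - M_roots r s"

lemma cross_root_split:
  assumes "b \<in> pos_roots r - M_roots r s"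
  obtains i j y where "root_data r i j 1 y" "i \<le> s" "s < j" "b = root_vec i j 1 y"
proof -
  have pos: "b \<in> pos_roots r" using assms by blast
  then obtain i j y where h: "root_data r i j 1 y" "i \<le> j" "b = root_vec i j 1 y"
    unfolding pos_roots_iff by blast
  have "b \<in> roots r" using pos unfolding roots_def by blast
  then have "\<not> trivial_on_tau s b" using assms unfolding M_roots_def by blast
  then have "\<not> (i \<le> s \<longleftrightarrow> j \<le> s)" using trivial_on_tau_root_vec[OF h(1)] h(3) by simp
  then have "i \<le> s" "s < j" using h(2) by auto
  with h that show thesis by blast
qed

lemma pair_cross_root_coweight:
  assumes "k < r" "k \<le> s" "b \<in> cross_roots r s k"
  shows "pair r b (coweight r k) = 1"
proof -
  have "b \<in> pos_roots r - M_roots r s" using assms(3) by blast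
  then obtain i j y where h: "root_data r i j 1 y" "i \<le> s" "s < j" "b = root_vec i j 1 y"
    by (rule cross_root_split)
  have "b \<in> roots r" using assms(3) unfolding roots_def by blast
  then have "pair r b (coweight r k) \<noteq> 0" using assms(3) unfolding levi_roots_def by blast
  moreover have "\<not> j \<le> k" using h(3) assms(2) by simp
  ultimately show ?thesis unfolding h(4) pair_root_vec_coweight[OF assms(1) h(1)] by (simp split: if_splits)
qed
lemma pair_chi: "finite R \<Longrightarrow> pair r (chi R L w) x = (\<Sum>b\<in>{b \<in> R - L. w b \<in> R}. pair r b x)"
  unfolding pair_def chi_def by (simp add: of_int_sum sum_distrib_right) (rule sum.swap)

lemma pair_chi_diff:
  assumes "k < r" "k \<le> s" "w \<in> W_M r s"
  shows "pair r (chi (pos_roots r) (levi_roots r k) w) (coweight r k)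
       - pair r (chi (M_pos_roots r s) (levi_roots r k) w) (coweight r k)
     = of_nat (card {b \<in> cross_roots r s k. w b \<in> pos_roots r})"
proof -
  define S1 where "S1 = {b \<in> pos_roots r - levi_roots r k. w b \<in> pos_roots r}"
  define S2 where "S2 = {b \<in> M_pos_roots r s - levi_roots r k. w b \<in> M_pos_roots r s}"
  have sub: "S2 \<subseteq> S1" unfolding S1_def S2_def M_pos_roots_def by auto
  have fin: "finite S1" unfolding S1_def using finite_pos_roots by auto
  have diff: "S1 - S2 = {b \<in> cross_roots r s k. w b \<in> pos_roots r}"
    using W_M_maps_M_pos_roots[OF assms(3)] unfolding S1_def S2_def M_pos_roots_def by auto
  have "pair r (chi (pos_roots r) (levi_roots r k) w) (coweight r k)
       - pair r (chi (M_pos_roots r s) (levi_roots r k) w) (coweight r k)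
     = (\<Sum>b\<in>S1. pair r b (coweight r k)) - (\<Sum>b\<in>S2. pair r b (coweight r k))"
    unfolding S1_def S2_def by (simp add: pair_chi finite_pos_roots finite_M_pos_roots)
  also have "\<dots> = (\<Sum>b\<in>S1 - S2. pair r b (coweight r k))"
    using sum_diff[OF fin sub, of "\<lambda>b. pair r b (coweight r k)"] by simp
  also have "\<dots> = (\<Sum>b\<in>S1 - S2. 1)"
    unfolding diff using pair_cross_root_coweight[OF assms(1,2)] by (intro sum.cong) auto
  finally show ?thesis unfolding diff by simp
qed

lemma dimGP_minus_dimMQ: "dimGP r k - dimMQ r s k = int (card (cross_roots r s k))"
proof -
  have sub: "M_pos_roots r s - levi_roots r k \<subseteq> pos_roots r - levi_roots r k"
    unfolding M_pos_roots_def by auto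
  have diff: "(pos_roots r - levi_roots r k) - (M_pos_roots r s - levi_roots r k) = cross_roots r s k"
    unfolding M_pos_roots_def by auto
  have "card (cross_roots r s k)
      = card (pos_roots r - levi_roots r k) - card (M_pos_roots r s - levi_roots r k)"
    using card_Diff_subset[OF _ sub] finite_M_pos_roots diff by simp
  moreover have "card (M_pos_roots r s - levi_roots r k) \<le> card (pos_roots r - levi_roots r k)"
    using card_mono[OF _ sub] finite_pos_roots by auto
  ultimately show ?thesis unfolding dimGP_def dimMQ_def by simp
qed

lemma len_pos_roots_minus_len_M_pos_roots:
  assumes "w \<in> W_M r s"
    and "\<And>b. b \<in> pos_roots r - M_roots r s \<Longrightarrow> b \<in> levi_roots r k \<Longrightarrow> w b \<in> pos_roots r"
  shows "int (len (pos_roots r) w) - int (len (M_pos_roots r s) w)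
       = int (card {b \<in> cross_roots r s k. w b \<notin> pos_roots r})"
proof -
  define T1 where "T1 = {b \<in> pos_roots r. w b \<notin> pos_roots r}"
  define T2 where "T2 = {b \<in> M_pos_roots r s. w b \<notin> pos_roots r}"
  have T2: "{b \<in> M_pos_roots r s. w b \<notin> M_pos_roots r s} = T2"
    using W_M_maps_M_pos_roots[OF assms(1)] unfolding T2_def M_pos_roots_def by auto
  have sub: "T2 \<subseteq> T1" unfolding T1_def T2_def M_pos_roots_def by auto
  have fin: "finite T1" unfolding T1_def using finite_pos_roots by auto
  have diff: "T1 - T2 = {b \<in> cross_roots r s k. w b \<notin> pos_roots r}"
    using assms(2) unfolding T1_def T2_def M_pos_roots_def by auto
  have "card (T1 - T2) = card T1 - card T2" by (rule card_Diff_subset[OF finite_subset[OF sub fin] sub])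
  moreover have "card T2 \<le> card T1" by (rule card_mono[OF fin sub])
  ultimately show ?thesis unfolding len_def T2 T1_def[symmetric] diff[symmetric] by simp
qed

lemma card_filter_add_card_filter_not: "finite A \<Longrightarrow> card {b \<in> A. P b} + card {b \<in> A. \<not> P b} = card A"
proof -
  assume "finite A"
  moreover have "{b \<in> A. P b} \<union> {b \<in> A. \<not> P b} = A" by auto
  moreover have "{b \<in> A. P b} \<inter> {b \<in> A. \<not> P b} = {}" by auto
  ultimately show ?thesis using card_Un_disjoint[of "{b \<in> A. P b}" "{b \<in> A. \<not> P b}"] by simp
qed

lemma codimG_minus_codimM:
  assumes "w \<in> W_M r s"
    and "\<And>b. b \<in> pos_roots r - M_roots r s \<Longrightarrow> b \<in> levi_roots r k \<Longrightarrow> w b \<in> pos_roots r"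
  shows "codimG r k w - codimM r s k w = int (card {b \<in> cross_roots r s k. w b \<in> pos_roots r})"
proof -
  have "int (len (pos_roots r) w) - int (len (M_pos_roots r s) w)
      = int (card {b \<in> cross_roots r s k. w b \<notin> pos_roots r})"
    by (rule len_pos_roots_minus_len_M_pos_roots) (use assms in auto)
  moreover have "card {b \<in> cross_roots r s k. w b \<in> pos_roots r}
      + card {b \<in> cross_roots r s k. w b \<notin> pos_roots r} = card (cross_roots r s k)"
    using finite_pos_roots by (intro card_filter_add_card_filter_not) blast
  ultimately show ?thesis using dimGP_minus_dimMQ[of r k s] unfolding codimG_def codimM_def by linarith
qed

text \<open>The Levi roots \<open>eps_i \<plusminus> eps_j\<close> with \<open>k < i \<le> s < j\<close> are kept positive, because \<open>w\<close> has
  sign \<open>+1\<close> at coordinate \<open>i\<close> and preserves the blocks, so the coefficient at the smaller index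
  of the image is still \<open>+1\<close>.\<close>
lemma W_MQ_maps_levi_pos_roots_pos:
  assumes w: "w \<in> W_MQ r s k" and ks: "k \<le> s" "s < r"
    and b: "b \<in> pos_roots r - M_roots r s" "b \<in> levi_roots r k"
  shows "w b \<in> pos_roots r"
proof -
  have wM: "w \<in> W_M r s" using w unfolding W_MQ_def min_coset_reps_def by auto
  obtain g f c where sp: "block_signed_perm r s g f c" "w = (\<lambda>v j. c j * v (g j))"
    using W_M_block_signed_perm[OF wM] by blast
  obtain i j y where h: "root_data r i j 1 y" "i \<le> s" "s < j" "b = root_vec i j 1 y"
    using b(1) by (rule cross_root_split)
  have kr: "k < r" using ks by simp
  have "pair r (root_vec i j 1 y) (coweight r k) = 0" using b(2) h(4) unfolding levi_roots_def by auto
  moreover have "\<not> j \<le> k" using h(3) ks by simp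
  ultimately have "k < i" unfolding pair_root_vec_coweight[OF kr h(1)] by (simp split: if_splits)
  then have sign: "c (f i) = 1" using W_MQ_sign_eq_1[OF w ks sp] h(2) by auto
  have "w b = root_vec (f i) (f j) 1 (y * c (f j))"
    unfolding h(4) sp(2) block_signed_perm_root_vec[OF sp(1)] sign by simp
  moreover have "root_data r (f i) (f j) 1 (y * c (f j))"
    using block_signed_perm_root_data[OF sp(1) h(1)] sign by simp
  moreover have "f i \<le> s" "s < f j"
    using block_signed_perm_inv_le_iff[OF sp(1), of i] block_signed_perm_inv_le_iff[OF sp(1), of j] h(2,3)
    by auto
  ultimately show ?thesis using root_vec_in_pos_roots_iff by auto
qed

lemma pair_diff: "pair r (u - v) x = pair r u x - pair r v x"
  unfolding pair_def by (simp add: algebra_simps sum_subtractf)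

lemma pair_sum_list: "pair r (\<Sum>w\<leftarrow>ws. h w) x = (\<Sum>w\<leftarrow>ws. pair r (h w) x)"
  by (induction ws) (simp_all add: pair_def algebra_simps sum.distrib)

lemma theta_minus_thetaM:
  fixes r s k :: nat
  defines "d \<equiv> \<lambda>w. pair r (chi (pos_roots r) (levi_roots r k) w) (coweight r k)
                   - pair r (chi (M_pos_roots r s) (levi_roots r k) w) (coweight r k)"
  shows "theta r k ws - thetaM r s k ws = d id - (\<Sum>w\<leftarrow>ws. d w)"
  unfolding theta_def thetaM_def pair_diff pair_sum_list d_def sum_list_subtractf by simp

lemma expdimG_minus_expdimM:
  "expdimG r k ws - expdimM r s k ws
     = (dimGP r k - dimMQ r s k) - (\<Sum>w\<leftarrow>ws. codimG r k w - codimM r s k w)"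
  unfolding expdimG_def expdimM_def sum_list_subtractf by simp

theorem mainTheorem9:
  fixes r s k :: nat and ws :: "((nat \<Rightarrow> int) \<Rightarrow> (nat \<Rightarrow> int)) list"
  assumes "1 \<le> k" "k \<le> s" "s < r"
    and "\<forall>w \<in> set ws. w \<in> W_MQ r s k"
  shows "theta r k ws - thetaM r s k ws = of_int (expdimG r k ws - expdimM r s k ws)"
proof -
  define d where "d w = pair r (chi (pos_roots r) (levi_roots r k) w) (coweight r k)
                      - pair r (chi (M_pos_roots r s) (levi_roots r k) w) (coweight r k)" for w
  have kr: "k < r" using assms by simp
  have "id \<in> W_M r s" unfolding W_M_def by (rule weyl_group.id_in)
  then have "d id = of_nat (card {b \<in> cross_roots r s k. id b \<in> pos_roots r})"
    unfolding d_def by (rule pair_chi_diff[OF kr assms(2)])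
  also have "{b \<in> cross_roots r s k. id b \<in> pos_roots r} = cross_roots r s k" by auto
  finally have d_id: "d id = of_int (dimGP r k - dimMQ r s k)"
    unfolding dimGP_minus_dimMQ by (simp only: of_int_of_nat_eq)
  have d_w: "d w = of_int (codimG r k w - codimM r s k w)" if "w \<in> set ws" for w
  proof -
    have w: "w \<in> W_MQ r s k" using that assms(4) by auto
    then have wM: "w \<in> W_M r s" unfolding W_MQ_def min_coset_reps_def by auto
    have "d w = of_nat (card {b \<in> cross_roots r s k. w b \<in> pos_roots r})"
      unfolding d_def by (rule pair_chi_diff[OF kr assms(2) wM])
    also have "\<dots> = of_int (codimG r k w - codimM r s k w)"
      using codimG_minus_codimM[OF wM W_MQ_maps_levi_pos_roots_pos[OF w assms(2,3)]] by simp
    finally show ?thesis .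
  qed
  have "(\<Sum>w\<leftarrow>ws. d w) = (\<Sum>w\<leftarrow>ws. of_int (codimG r k w - codimM r s k w))"
    using d_w by (metis (no_types, lifting) map_cong)
  also have "\<dots> = of_int (\<Sum>w\<leftarrow>ws. codimG r k w - codimM r s k w)"
    by (induction ws) simp_all
  finally show ?thesis
    unfolding theta_minus_thetaM expdimG_minus_expdimM d_def[symmetric] d_id by simp
qed

end
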